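(* Let $n\in\mathbb{N}$ be even and let $(\mathcal{A},\mathcal{B},\mathcal{C})$ be a triple of adversaries for the BB84 monogamy-of-entanglement game with identical basis with parameter $n$ that wins with probability $p_n$. Then there exist a quantum state $\rho_{012}$ and a pair of adversaries for the extended non-local game with parameter $n$ that win with the same probability $p_n$.
   Context: Let $\Theta_n=\{\theta\in\{0,1\}^n: |\theta|=n/2\}$ and $|x^\theta\rangle=\bigotimes_i H^{\theta_i}|x_i\rangle$. For $\theta\in\Theta_n$, $b\in\{0,1\}$ and $x\in\{0,1\}^n$ let $x_{T_b}=(x_i)_{i:\theta_i=b}$. BB84 game with identical basis, parameter $n$: the challenger samples uniform $x\in\{0,1\}^n$, $\theta\in\Theta_n$, sends $|x^\theta\rangle$ to $\mathcal{A}$; $\mathcal{A}$ sends the two parts of a bipartite state $\sigma_{12}$ to $\mathcal{B}$ and $\mathcal{C}$ (who then cannot communicate); the challenger samples a uniform bit $b$ and sends $(\theta,b)$ to both; $\mathcal{B},\mathcal{C}$ output $x_1,x_2$; they win if $x_1=x_2=x_{T_b}$. Extended non-local game, parameter $n$, between a challenger and two players $\mathcal{B}',\mathcal{C}'$: the players jointly prepare a state $\rho_{012}$ where $\rho_0$ is an $n$-qubit register, send register $0$ to the challenger, and keep registers $1$ and $2$ respectively; from then on they cannot communicate. The challenger samples uniform $\theta\in\Theta_n$ and $b\in\{0,1\}$, measures the $i$-th qubit of register $0$ in the computational basis if $\theta_i=0$ and in the Hadamard basis if $\theta_i=1$, obtaining $m\in\{0,1\}^n$, and sends $(\theta,b)$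 to both players. The players output $m_1,m_2$ and win if $m_1=m_2=m_{T_b}$. *)

theory Defs
  imports "Jordan_Normal_Form.Schur_Decomposition"
begin

(* Finite-dimensional quantum mechanics with complex matrices.
   Kets are column matrices (d x 1).  Bits: False = 0, True = 1. *)

definition kron :: "complex mat \<Rightarrow> complex mat \<Rightarrow> complex mat" where
  "kron A B = mat (dim_row A * dim_row B) (dim_col A * dim_col B)
     (\<lambda>(i,j). A $$ (i div dim_row B, j div dim_col B) * B $$ (i mod dim_row B, j mod dim_col B))"

definition mtrace :: "complex mat \<Rightarrow> complex" where
  "mtrace A = (\<Sum>i<dim_row A. A $$ (i,i))"

definition psd :: "complex mat \<Rightarrow> bool" where
  "psd A \<longleftrightarrow> dim_row A = dim_col A \<and>
     (\<forall>v \<in> carrier_vec (dim_row A).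
        conjugate v \<bullet> (A *\<^sub>v v) \<in> \<real> \<and> Re (conjugate v \<bullet> (A *\<^sub>v v)) \<ge> 0)"

definition density :: "nat \<Rightarrow> complex mat \<Rightarrow> bool" where
  "density d \<rho> \<longleftrightarrow> \<rho> \<in> carrier_mat d d \<and> psd \<rho> \<and> mtrace \<rho> = 1"

definition povm :: "nat \<Rightarrow> 'o set \<Rightarrow> ('o \<Rightarrow> complex mat) \<Rightarrow> bool" where
  "povm d Out M \<longleftrightarrow> finite Out \<and> (\<forall>a\<in>Out. M a \<in> carrier_mat d d \<and> psd (M a)) \<and>
     (\<forall>i<d. \<forall>j<d. (\<Sum>a\<in>Out. M a $$ (i,j)) = (1\<^sub>m d) $$ (i,j))"

definition kraus :: "nat \<Rightarrow> nat \<Rightarrow> complex mat list \<Rightarrow> bool" where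
  "kraus din dout Ks \<longleftrightarrow> (\<forall>K\<in>set Ks. K \<in> carrier_mat dout din) \<and>
     (\<forall>i<din. \<forall>j<din. (\<Sum>K\<leftarrow>Ks. (mat_adjoint K * K) $$ (i,j)) = (1\<^sub>m din) $$ (i,j))"

definition channel :: "nat \<Rightarrow> complex mat list \<Rightarrow> complex mat \<Rightarrow> complex mat" where
  "channel dout Ks \<rho> = mat dout dout (\<lambda>(i,j). (\<Sum>K\<leftarrow>Ks. (K * \<rho> * mat_adjoint K) $$ (i,j)))"

definition ket :: "bool \<Rightarrow> complex mat" where
  "ket x = mat 2 1 (\<lambda>(i,j). if i = (if x then 1 else 0) then 1 else 0)"

definition hadamard :: "complex mat" where
  "hadamard = mat 2 2 (\<lambda>(i,j). (if i = 1 \<and> j = 1 then -1 else 1) / complex_of_real (sqrt 2))"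

definition qubit :: "bool \<Rightarrow> bool \<Rightarrow> complex mat" where
  "qubit t x = (if t then hadamard * ket x else ket x)"

(* |x^theta> = tensor_i H^{theta_i} |x_i>, first qubit = most significant tensor factor *)
definition bb84_ket :: "bool list \<Rightarrow> bool list \<Rightarrow> complex mat" where
  "bb84_ket \<theta> x = foldr (\<lambda>(t, xi) M. kron (qubit t xi) M) (zip \<theta> x) (1\<^sub>m 1)"

definition proj :: "complex mat \<Rightarrow> complex mat" where
  "proj v = v * mat_adjoint v"

definition bitstrings :: "nat \<Rightarrow> bool list set" where
  "bitstrings n = {x. length x = n}"

definition Theta :: "nat \<Rightarrow> bool list set" where
  "Theta n = {\<theta>. length \<theta> = n \<and> length (filter id \<theta>) = n div 2}"

definition restr :: "bool list \<Rightarrow> bool list \<Rightarrow> bool \<Rightarrow> bool list" where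
  "restr x \<theta> b = map fst (filter (\<lambda>p. snd p = b) (zip x \<theta>))"

(* BB84 game with identical basis: A = channel with Kraus ops Ks from n qubits to
   registers 1 (dim d1) and 2 (dim d2); B, C = families of POVMs indexed by (theta,b). *)
definition win_bb84 :: "nat \<Rightarrow> nat \<Rightarrow> nat \<Rightarrow> complex mat list
     \<Rightarrow> (bool list \<Rightarrow> bool \<Rightarrow> bool list \<Rightarrow> complex mat)
     \<Rightarrow> (bool list \<Rightarrow> bool \<Rightarrow> bool list \<Rightarrow> complex mat) \<Rightarrow> real" where
  "win_bb84 n d1 d2 Ks B C =
     (\<Sum>x\<in>bitstrings n. \<Sum>\<theta>\<in>Theta n. \<Sum>b\<in>(UNIV::bool set).
        Re (mtrace (kron (B \<theta> b (restr x \<theta> b)) (C \<theta> b (restr x \<theta> b))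
                    * channel (d1 * d2) Ks (proj (bb84_ket \<theta> x)))))
     / (2 ^ n * real (card (Theta n)) * 2)"

(* Extended non-local game: state rho on registers 0 (n qubits), 1 (dim d1), 2 (dim d2). *)
definition win_ext :: "nat \<Rightarrow> nat \<Rightarrow> nat \<Rightarrow> complex mat
     \<Rightarrow> (bool list \<Rightarrow> bool \<Rightarrow> bool list \<Rightarrow> complex mat)
     \<Rightarrow> (bool list \<Rightarrow> bool \<Rightarrow> bool list \<Rightarrow> complex mat) \<Rightarrow> real" where
  "win_ext n d1 d2 \<rho> B C =
     (\<Sum>\<theta>\<in>Theta n. \<Sum>b\<in>(UNIV::bool set). \<Sum>m\<in>bitstrings n.
        Re (mtrace (kron (kron (proj (bb84_ket \<theta> m)) (B \<theta> b (restr m \<theta> b))) (C \<theta> b (restr m \<theta> b))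
                    * \<rho>)))
     / (real (card (Theta n)) * 2)"

end

theory Submission
  imports Defs
begin

text \<open>The players share the normalised Choi state \<open>\<rho>\<close> of \<open>\<A>\<close>'s channel \<open>\<Phi>\<close>: half of a
  maximally entangled state on \<open>2\<^sup>n\<close> levels is kept as register 0 and \<open>\<Phi>\<close> is applied to the other
  half; \<open>\<B>\<close> and \<open>\<C>\<close> keep their measurements. Projecting register 0 onto \<open>P\<close> leaves
  \<open>\<Phi>(P\<^sup>T) / 2\<^sup>n\<close> on registers 1 and 2, i.e. \<open>tr((P \<otimes> M) \<rho>) = tr(M \<Phi>(P\<^sup>T)) / 2\<^sup>n\<close>.
  BB84 states are real, so \<open>P\<^sup>T = P\<close> for \<open>P = |x\<^sup>\<theta>\<rangle>\<langle>x\<^sup>\<theta>|\<close>, and the factor \<open>1 / 2\<^sup>n\<close> is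
  exactly the probability of the challenger's uniformly random \<open>x\<close>.\<close>

lemma dim_mat_adjoint [simp]:
  "dim_row (mat_adjoint A) = dim_col A" "dim_col (mat_adjoint A) = dim_row A"
  unfolding mat_adjoint_def by auto

lemma index_mat_adjoint:
  "i < dim_col A \<Longrightarrow> j < dim_row A \<Longrightarrow> mat_adjoint A $$ (i, j) = cnj (A $$ (j, i))"
  unfolding mat_adjoint_def by (auto simp: mat_of_rows_def)

lemma dim_kron [simp]:
  "dim_row (kron A B) = dim_row A * dim_row B" "dim_col (kron A B) = dim_col A * dim_col B"
  unfolding kron_def by auto

lemma index_kron:
  "i < dim_row A * dim_row B \<Longrightarrow> j < dim_col A * dim_col B \<Longrightarrow>
   kron A B $$ (i, j) = A $$ (i div dim_row B, j div dim_col B) * B $$ (i mod dim_row B, j mod dim_col B)"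
  unfolding kron_def by auto

lemma kron_carrier:
  "A \<in> carrier_mat m n \<Longrightarrow> B \<in> carrier_mat p q \<Longrightarrow> kron A B \<in> carrier_mat (m * p) (n * q)"
  by auto

lemma mult_add_div_mod:
  fixes i a D :: nat
  assumes "a < D"
  shows "(i * D + a) div D = i" "(i * D + a) mod D = a"
  using assms by auto

lemma mult_add_less_mult:
  fixes i a N D :: nat
  assumes "i < N" "a < D"
  shows "i * D + a < N * D"
proof -
  have "i * D + a < Suc i * D" using assms(2) by simp
  also have "\<dots> \<le> N * D" using assms(1) by (intro mult_right_mono) auto
  finally show ?thesis .
qed

lemma sum_lessThan_mult:
  "(\<Sum>r<N * D. f r) = (\<Sum>i<N. \<Sum>a<D. f (i * D + a :: nat))"
proof -
  have "sum f {i * D..<i * D + D} = (\<Sum>a<D. f (i * D + a))" for i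
    using sum.shift_bounds_nat_ivl[of f 0 "i * D" D] by (simp add: atLeast0LessThan add.commute)
  then show ?thesis
    by (simp add: sum.nat_group[of f D N, symmetric])
qed

lemma sum_sum_list_swap: "(\<Sum>i\<in>I. \<Sum>x\<leftarrow>xs. f i x) = (\<Sum>x\<leftarrow>xs. \<Sum>i\<in>I. f i x)"
  by (induction xs) (simp_all add: sum.distrib)

lemma div_mod_mult2:
  fixes i b c :: nat
  shows "i div (b * c) = i div c div b" "i mod (b * c) div c = i div c mod b"
    "i mod (b * c) mod c = i mod c"
proof -
  show "i div (b * c) = i div c div b"
    by (metis div_mult2_eq mult.commute)
  show "i mod (b * c) div c = i div c mod b"
    using mod_mult2_eq[of i c b] by (cases "c = 0") (simp_all add: mult.commute)
  show "i mod (b * c) mod c = i mod c"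
    by (simp add: mod_mod_cancel)
qed

lemma kron_assoc: "kron (kron A B) C = kron A (kron B C)"
proof (rule eq_matI)
  fix i j
  assume "i < dim_row (kron A (kron B C))" "j < dim_col (kron A (kron B C))"
  then have i: "i < dim_row A * (dim_row B * dim_row C)" and j: "j < dim_col A * (dim_col B * dim_col C)"
    by simp_all
  then have "0 < dim_row B * dim_row C" "0 < dim_col B * dim_col C"
    by (auto intro: gr0I)
  with i j have "i div dim_row C < dim_row A * dim_row B" "j div dim_col C < dim_col A * dim_col B"
    "i mod (dim_row B * dim_row C) < dim_row B * dim_row C"
    "j mod (dim_col B * dim_col C) < dim_col B * dim_col C"
    by (auto simp: less_mult_imp_div_less mult.assoc)
  with i j show "kron (kron A B) C $$ (i, j) = kron A (kron B C) $$ (i, j)"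
    by (simp add: index_kron div_mod_mult2 mult.assoc)
qed (simp_all add: mult.assoc)

lemma mtrace_mult:
  assumes "A \<in> carrier_mat n m" "B \<in> carrier_mat m n"
  shows "mtrace (A * B) = (\<Sum>i<n. \<Sum>j<m. A $$ (i, j) * B $$ (j, i))"
  using assms by (auto simp: mtrace_def scalar_prod_def atLeast0LessThan intro!: sum.cong)

lemma index_sandwich:
  assumes "K \<in> carrier_mat D N" "Q \<in> carrier_mat N N" "c < D" "a < D"
  shows "(K * Q * mat_adjoint K) $$ (c, a) = (\<Sum>i<N. \<Sum>j<N. K $$ (c, j) * Q $$ (j, i) * cnj (K $$ (a, i)))"
  using assms
  by (auto simp: scalar_prod_def atLeast0LessThan index_mat_adjoint sum_distrib_right intro!: sum.cong)

text \<open>The normalised Choi state \<open>(id \<otimes> \<Phi>)(|\<Omega>\<rangle>\<langle>\<Omega>|)\<close> of the channel \<open>\<Phi>\<close> with Kraus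
  operators \<open>Ks\<close>, where \<open>|\<Omega>\<rangle> = (\<Sum>\<^sub>i |i\<rangle>|i\<rangle>) / sqrt N\<close>; the index \<open>r = i * D + a\<close>
  stands for \<open>|i\<rangle>|a\<rangle>\<close>.\<close>

definition choi_state :: "nat \<Rightarrow> nat \<Rightarrow> complex mat list \<Rightarrow> complex mat" where
  "choi_state N D Ks = mat (N * D) (N * D)
     (\<lambda>(r, s). (\<Sum>K\<leftarrow>Ks. K $$ (r mod D, r div D) * cnj (K $$ (s mod D, s div D))) / of_nat N)"

lemma dim_choi_state [simp]:
  "dim_row (choi_state N D Ks) = N * D" "dim_col (choi_state N D Ks) = N * D"
  by (simp_all add: choi_state_def)

lemma choi_state_carrier: "choi_state N D Ks \<in> carrier_mat (N * D) (N * D)"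
  by (rule carrier_matI) simp_all

lemma index_choi_state:
  assumes "i < N" "a < D" "j < N" "c < D"
  shows "choi_state N D Ks $$ (i * D + a, j * D + c) =
    (\<Sum>K\<leftarrow>Ks. K $$ (a, i) * cnj (K $$ (c, j))) / of_nat N"
  using assms by (simp add: choi_state_def mult_add_less_mult mult_add_div_mod)

lemma psd_choi_state: "psd (choi_state N D Ks)"
  unfolding psd_def
proof (intro conjI ballI)
  show "dim_row (choi_state N D Ks) = dim_col (choi_state N D Ks)"
    by (simp add: choi_state_def)
  fix v :: "complex vec"
  assume "v \<in> carrier_vec (dim_row (choi_state N D Ks))"
  then have v: "dim_vec v = N * D"
    by (simp add: choi_state_def)
  define w where "w K r = K $$ (r mod D, r div D)" for K :: "complex mat" and r
  define z where "z K = (\<Sum>r<N * D. cnj (v $ r) * w K r)" for K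
  have "conjugate v \<bullet> (choi_state N D Ks *\<^sub>v v) =
      (\<Sum>r<N * D. \<Sum>s<N * D. \<Sum>K\<leftarrow>Ks. cnj (v $ r) * w K r * cnj (cnj (v $ s) * w K s)) / of_nat N"
    using v
    by (auto simp: scalar_prod_def atLeast0LessThan choi_state_def w_def sum_distrib_left sum_divide_distrib
        sum_list_const_mult[symmetric] sum_list_mult_const[symmetric] ac_simps intro!: sum.cong)
  also have "\<dots> = (\<Sum>K\<leftarrow>Ks. z K * cnj (z K)) / of_nat N"
    by (simp add: z_def cnj_sum sum_product sum_sum_list_swap)
  also have "\<dots> = of_real ((\<Sum>K\<leftarrow>Ks. (cmod (z K))\<^sup>2) / real N)"
    by (simp add: sum_list_of_real[symmetric] complex_norm_square[symmetric] o_def)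
  finally have quadratic_form:
    "conjugate v \<bullet> (choi_state N D Ks *\<^sub>v v) = of_real ((\<Sum>K\<leftarrow>Ks. (cmod (z K))\<^sup>2) / real N)" .
  show "conjugate v \<bullet> (choi_state N D Ks *\<^sub>v v) \<in> \<real>"
    unfolding quadratic_form by simp
  show "0 \<le> Re (conjugate v \<bullet> (choi_state N D Ks *\<^sub>v v))"
    unfolding quadratic_form by (auto intro!: divide_nonneg_nonneg sum_list_nonneg)
qed

lemma mtrace_choi_state:
  assumes kraus: "kraus N D Ks" and "0 < N"
  shows "mtrace (choi_state N D Ks) = 1"
proof -
  have column_norm: "(\<Sum>K\<leftarrow>Ks. \<Sum>a<D. K $$ (a, i) * cnj (K $$ (a, i))) = 1"
    if i: "i < N" for i
  proof -
    have "(mat_adjoint K * K) $$ (i, i) = (\<Sum>a<D. K $$ (a, i) * cnj (K $$ (a, i)))" if "K \<in> set Ks" for K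
      using kraus that i
      by (auto simp: kraus_def scalar_prod_def atLeast0LessThan index_mat_adjoint mult.commute
          intro!: sum.cong)
    moreover have "(\<Sum>K\<leftarrow>Ks. (mat_adjoint K * K) $$ (i, i)) = 1"
      using kraus i by (simp add: kraus_def)
    ultimately show ?thesis
      by (simp cong: map_cong)
  qed
  have "mtrace (choi_state N D Ks) = (\<Sum>i<N. \<Sum>a<D. choi_state N D Ks $$ (i * D + a, i * D + a))"
    by (simp add: mtrace_def sum_lessThan_mult)
  also have "\<dots> = (\<Sum>i<N. (\<Sum>K\<leftarrow>Ks. \<Sum>a<D. K $$ (a, i) * cnj (K $$ (a, i))) / of_nat N)"
    by (simp add: index_choi_state sum_divide_distrib[symmetric] sum_sum_list_swap)
  also have "\<dots> = 1"
    using \<open>0 < N\<close> by (simp add: column_norm)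
  finally show ?thesis .
qed

lemma density_choi_state:
  assumes "kraus N D Ks" "0 < N"
  shows "density (N * D) (choi_state N D Ks)"
  using assms by (simp add: density_def choi_state_carrier psd_choi_state mtrace_choi_state)

lemma channel_carrier: "channel D Ks Q \<in> carrier_mat D D"
  by (simp add: channel_def)

lemma mtrace_kron_choi_state:
  assumes P: "P \<in> carrier_mat N N" and M: "M \<in> carrier_mat D D"
    and Ks: "\<forall>K\<in>set Ks. K \<in> carrier_mat D N"
  shows "mtrace (kron P M * choi_state N D Ks) =
    mtrace (M * channel D Ks (transpose_mat P)) / of_nat N"
proof -
  have "mtrace (kron P M * choi_state N D Ks) =
      (\<Sum>i<N. \<Sum>a<D. \<Sum>j<N. \<Sum>c<D.
        P $$ (i, j) * M $$ (a, c) * choi_state N D Ks $$ (j * D + c, i * D + a))"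
    using P M
    by (simp add: mtrace_mult[OF kron_carrier[OF P M] choi_state_carrier] sum_lessThan_mult index_kron
        mult_add_less_mult mult_add_div_mod)
  also have "\<dots> = (\<Sum>i<N. \<Sum>a<D. \<Sum>j<N. \<Sum>c<D.
      P $$ (i, j) * M $$ (a, c) * ((\<Sum>K\<leftarrow>Ks. K $$ (c, j) * cnj (K $$ (a, i))) / of_nat N))"
    by (simp add: index_choi_state)
  also have "\<dots> = (\<Sum>K\<leftarrow>Ks. \<Sum>i<N. \<Sum>a<D. \<Sum>j<N. \<Sum>c<D.
      P $$ (i, j) * M $$ (a, c) * (K $$ (c, j) * cnj (K $$ (a, i)))) / of_nat N"
    by (simp only: times_divide_eq_right sum_list_const_mult[symmetric] sum_divide_distrib[symmetric]
        sum_sum_list_swap)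
  also have "\<dots> = (\<Sum>K\<leftarrow>Ks. \<Sum>a<D. \<Sum>c<D. \<Sum>i<N. \<Sum>j<N.
      M $$ (a, c) * (K $$ (c, j) * P $$ (i, j) * cnj (K $$ (a, i)))) / of_nat N"
    by (simp only: sum.swap[of _ "{..<N}" "{..<D}"] ac_simps)
  also have "\<dots> = (\<Sum>K\<leftarrow>Ks. \<Sum>a<D. \<Sum>c<D.
      M $$ (a, c) * (K * transpose_mat P * mat_adjoint K) $$ (c, a)) / of_nat N"
  proof -
    have sandwich: "(K * transpose_mat P * mat_adjoint K) $$ (c, a) =
        (\<Sum>i<N. \<Sum>j<N. K $$ (c, j) * P $$ (i, j) * cnj (K $$ (a, i)))"
      if "K \<in> set Ks" "a < D" "c < D" for K a c
      using index_sandwich[of K D N "transpose_mat P" c a] that P Ks by simp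
    show ?thesis
      by (intro arg_cong[where f = "\<lambda>x. x / of_nat N"] arg_cong[where f = sum_list] map_cong
          sum.cong refl)
        (simp add: sandwich sum_distrib_left del: index_mult_mat)
  qed
  also have "\<dots> = (\<Sum>a<D. \<Sum>c<D. M $$ (a, c) * channel D Ks (transpose_mat P) $$ (c, a)) / of_nat N"
    by (simp add: channel_def sum_list_const_mult[symmetric] sum_sum_list_swap)
  also have "\<dots> = mtrace (M * channel D Ks (transpose_mat P)) / of_nat N"
    using mtrace_mult[OF M channel_carrier] by simp
  finally show ?thesis .
qed

definition real_mat :: "complex mat \<Rightarrow> bool" where
  "real_mat A \<longleftrightarrow> (\<forall>i<dim_row A. \<forall>j<dim_col A. A $$ (i, j) \<in> \<real>)"

lemma real_mat_mult:
  assumes "real_mat A" "real_mat B" "dim_col A = dim_row B"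
  shows "real_mat (A * B)"
  using assms by (auto simp: real_mat_def scalar_prod_def intro!: sum_in_Reals Reals_mult)

lemma real_mat_kron:
  assumes "real_mat A" "real_mat B"
  shows "real_mat (kron A B)"
  unfolding real_mat_def
proof (intro allI impI)
  fix i j
  assume i: "i < dim_row (kron A B)" and j: "j < dim_col (kron A B)"
  then have "0 < dim_row B" "0 < dim_col B"
    by (auto intro: gr0I)
  with i j have "i div dim_row B < dim_row A" "j div dim_col B < dim_col A"
    "i mod dim_row B < dim_row B" "j mod dim_col B < dim_col B"
    by (auto simp: less_mult_imp_div_less)
  with i j assms show "kron A B $$ (i, j) \<in> \<real>"
    by (auto simp: real_mat_def index_kron intro!: Reals_mult)
qed

lemma real_mat_qubit: "real_mat (qubit t x)"
proof -
  have "real_mat (ket x)" "real_mat hadamard"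
    by (auto simp: real_mat_def ket_def hadamard_def)
  then show ?thesis
    by (simp add: qubit_def real_mat_mult ket_def hadamard_def)
qed

lemma qubit_carrier: "qubit t x \<in> carrier_mat 2 1"
  by (auto simp: qubit_def ket_def hadamard_def intro!: mult_carrier_mat)

lemma real_mat_bb84_ket: "real_mat (bb84_ket \<theta> x)"
proof -
  have "real_mat (1\<^sub>m 1)"
    by (simp add: real_mat_def)
  then have "real_mat (foldr (\<lambda>(t, xi) M. kron (qubit t xi) M) ps (1\<^sub>m 1))" for ps
    by (induction ps) (auto simp: real_mat_kron real_mat_qubit)
  then show ?thesis
    by (simp add: bb84_ket_def)
qed

lemma bb84_ket_carrier:
  "length x = length \<theta> \<Longrightarrow> bb84_ket \<theta> x \<in> carrier_mat (2 ^ length \<theta>) 1"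
proof (induction \<theta> arbitrary: x)
  case Nil
  then show ?case by (simp add: bb84_ket_def)
next
  case (Cons t \<theta>)
  then obtain xi x' where x: "x = xi # x'" and "length x' = length \<theta>"
    by (cases x) auto
  then have "kron (qubit t xi) (bb84_ket \<theta> x') \<in> carrier_mat (2 * 2 ^ length \<theta>) (1 * 1)"
    using Cons.IH qubit_carrier by (intro kron_carrier)
  then show ?case
    by (simp add: bb84_ket_def x)
qed

lemma mat_adjoint_real_mat: "real_mat A \<Longrightarrow> mat_adjoint A = transpose_mat A"
  by (rule eq_matI) (auto simp: real_mat_def index_mat_adjoint Reals_cnj_iff)

lemma proj_carrier: "v \<in> carrier_mat N 1 \<Longrightarrow> proj v \<in> carrier_mat N N"
  by (auto simp: proj_def)

lemma transpose_proj_real_mat: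
  assumes "real_mat v"
  shows "transpose_mat (proj v) = proj v"
proof -
  have "transpose_mat (v * transpose_mat v) = transpose_mat (transpose_mat v) * transpose_mat v"
    by (rule transpose_mult) auto
  then show ?thesis
    using assms by (simp add: proj_def mat_adjoint_real_mat)
qed

lemma length_restr:
  "length x = length \<theta> \<Longrightarrow> length (restr x \<theta> b) = length (filter (\<lambda>t. t = b) \<theta>)"
  unfolding restr_def by (induction x \<theta> rule: list_induct2) auto

lemma restr_in_bitstrings:
  assumes "even n" "\<theta> \<in> Theta n" "x \<in> bitstrings n"
  shows "restr x \<theta> b \<in> bitstrings (n div 2)"
proof -
  have \<theta>: "length \<theta> = n" "length (filter (\<lambda>t. t) \<theta>) = n div 2" and "length x = n"
    using assms by (auto simp: Theta_def bitstrings_def id_def)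
  moreover have "length (filter (\<lambda>t. t) \<theta>) + length (filter Not \<theta>) = length \<theta>"
    using sum_length_filter_compl[of "\<lambda>t. t" \<theta>] by simp
  ultimately have "length (filter (\<lambda>t. t = b) \<theta>) = n div 2"
    using \<open>even n\<close> by (cases b) (simp_all, presburger)
  with \<open>length x = n\<close> \<theta>(1) show ?thesis
    by (simp add: bitstrings_def length_restr)
qed

lemma win_ext_choi_state:
  assumes "even n" and kraus: "kraus (2 ^ n) (d1 * d2) Ks"
    and B: "\<forall>\<theta>\<in>Theta n. \<forall>b. povm d1 (bitstrings (n div 2)) (B \<theta> b)"
    and C: "\<forall>\<theta>\<in>Theta n. \<forall>b. povm d2 (bitstrings (n div 2)) (C \<theta> b)"
  shows "win_ext n d1 d2 (choi_state (2 ^ n) (d1 * d2) Ks) B C = win_bb84 n d1 d2 Ks B C"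
proof -
  define f where "f \<theta> b m = mtrace (kron (B \<theta> b (restr m \<theta> b)) (C \<theta> b (restr m \<theta> b))
    * channel (d1 * d2) Ks (proj (bb84_ket \<theta> m)))" for \<theta> b m
  have choi_term:
    "mtrace (kron (kron (proj (bb84_ket \<theta> m)) (B \<theta> b (restr m \<theta> b))) (C \<theta> b (restr m \<theta> b))
      * choi_state (2 ^ n) (d1 * d2) Ks) = f \<theta> b m / 2 ^ n"
    if "\<theta> \<in> Theta n" "m \<in> bitstrings n" for \<theta> b m
  proof -
    have "length m = length \<theta>" "length \<theta> = n"
      using that by (auto simp: Theta_def bitstrings_def)
    then have ket: "bb84_ket \<theta> m \<in> carrier_mat (2 ^ n) 1"
      using bb84_ket_carrier by blast
    have "restr m \<theta> b \<in> bitstrings (n div 2)"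
      using restr_in_bitstrings[OF \<open>even n\<close> that] .
    then have "kron (B \<theta> b (restr m \<theta> b)) (C \<theta> b (restr m \<theta> b))
        \<in> carrier_mat (d1 * d2) (d1 * d2)"
      using B C that by (intro kron_carrier) (auto simp: povm_def)
    from mtrace_kron_choi_state[OF proj_carrier[OF ket] this] kraus
    show ?thesis
      by (simp add: f_def kron_assoc transpose_proj_real_mat real_mat_bb84_ket kraus_def)
  qed
  have "win_ext n d1 d2 (choi_state (2 ^ n) (d1 * d2) Ks) B C =
      (\<Sum>\<theta>\<in>Theta n. \<Sum>b\<in>UNIV. \<Sum>m\<in>bitstrings n. Re (f \<theta> b m) / 2 ^ n)
        / (real (card (Theta n)) * 2)"
    unfolding win_ext_def by (simp add: choi_term)
  also have "\<dots> = win_bb84 n d1 d2 Ks B C"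
    unfolding win_bb84_def f_def
    by (simp add: sum.swap[of _ _ "bitstrings n"] sum_divide_distrib[symmetric] mult.assoc)
  finally show ?thesis .
qed

theorem mainTheorem3:
  fixes n d1 d2 :: nat
    and Ks :: "complex mat list"
    and B C :: "bool list \<Rightarrow> bool \<Rightarrow> bool list \<Rightarrow> complex mat"
  assumes "even n"
    and "kraus (2 ^ n) (d1 * d2) Ks"
    and "\<forall>\<theta>\<in>Theta n. \<forall>b. povm d1 (bitstrings (n div 2)) (B \<theta> b)"
    and "\<forall>\<theta>\<in>Theta n. \<forall>b. povm d2 (bitstrings (n div 2)) (C \<theta> b)"
  shows "\<exists>(e1::nat) (e2::nat) (\<rho>::complex mat) (B' :: bool list \<Rightarrow> bool \<Rightarrow> bool list \<Rightarrow> complex mat)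
            (C' :: bool list \<Rightarrow> bool \<Rightarrow> bool list \<Rightarrow> complex mat).
           density (2 ^ n * e1 * e2) \<rho> \<and>
           (\<forall>\<theta>\<in>Theta n. \<forall>b. povm e1 (bitstrings (n div 2)) (B' \<theta> b)) \<and>
           (\<forall>\<theta>\<in>Theta n. \<forall>b. povm e2 (bitstrings (n div 2)) (C' \<theta> b)) \<and>
           win_ext n e1 e2 \<rho> B' C' = win_bb84 n d1 d2 Ks B C"
proof -
  have "density (2 ^ n * d1 * d2) (choi_state (2 ^ n) (d1 * d2) Ks)"
    using density_choi_state[OF assms(2)] by (simp add: mult.assoc)
  with win_ext_choi_state[OF assms] assms(3,4) show ?thesis
    by blast
qed

end
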